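(* Let $V$ be a complex vector space of dimension $n\ge1$, and let $A,B$ be complex $n\times m$ matrices of rank $n$, with associated surjective maps $\rho_1=1_V\otimes A$, $\rho_2=1_V\otimes B:V^{\oplus m}\to V^{\oplus n}$. Then $\rho_1^{-1}(D_n)=\rho_2^{-1}(D_n)$ if and only if $\ker A=\ker B$.
   Context: $V^{\oplus n}$ is identified with the space of $n\times n$ complex matrices (an $n$-tuple of vectors of $V\cong\mathbb C^n$ as columns), and $D_n\subset V^{\oplus n}$ is the determinantal hypersurface $\{\det=0\}$. For a matrix $A=(a_{ij})$, $1_V\otimes A$ sends $(w_1,\dots,w_m)$ to $(\sum_ja_{1j}w_j,\dots,\sum_ja_{nj}w_j)$. *)

theory Defs
  imports "HOL-Analysis.Analysis"
begin

text \<open>An element of V^(+m) (V = C^n) is an m-tuple of vectors of V, represented as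
  W :: complex^'n^'m with W$j the j-th vector.  An element of V^(+n) is an n-tuple
  of vectors of V, i.e. an n x n matrix (the i-th vector is row i).\<close>

definition tensor_map :: "complex^'m^'n \<Rightarrow> complex^'n^'m \<Rightarrow> complex^'n^'n" where
  "tensor_map A W = (\<chi> i. \<Sum>j\<in>UNIV. A$i$j *s W$j)"

definition det_hypersurface :: "(complex^'n^'n) set" where
  "det_hypersurface = {X. det X = 0}"

definition mat_kernel :: "complex^'m^'n \<Rightarrow> (complex^'m) set" where
  "mat_kernel A = {x. A *v x = 0}"

end

theory Submission
  imports Defs
begin

(* Identify V^(+m) with (n x m)-matrices W and V^(+n) with (n x n)-matrices, so that
   the map 1_V (x) A is the matrix product W |-> A ** W (its i-th vector is the i-th
   row of A ** W).

   If ker A = ker B, then A ** W is singular iff some c <> 0 has W c in ker A, which is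
   the same condition for B; this direction needs no rank hypothesis.
   Conversely, suppose A ** W singular implies B ** W singular, and let x be in ker A
   with (B x)_k <> 0.  As B has full row rank it has a right inverse R; let W be R with
   its k-th column replaced by x.  Then A ** W has zero k-th column, so is singular,
   while B ** W is the identity with k-th column replaced by B x, whose determinant is
   (B x)_k <> 0 by Cramer's lemma.  Hence ker A is contained in ker B, and by symmetry
   the kernels agree. *)

(* A matrix whose rank equals its number of rows has a right inverse: its rows are
   pairwise distinct and linearly independent, so no nontrivial combination of them
   vanishes. *)
lemma full_row_rank_right_invertible:
  fixes A :: "'a::field^'m^'n"
  assumes rank: "rank A = CARD('n)"
  shows "\<exists>R. A ** R = mat 1"
proof -
  let ?row = "\<lambda>i. row i A"
  have rows_eq: "rows A = range ?row" by (auto simp: rows_def)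
  have fin: "finite (rows A)" by (simp add: rows_eq)
  have "CARD('n) \<le> card (rows A)"
    using rank vec.dim_le_card[OF vec.span_superset fin] by (simp add: row_rank_def_gen)
  moreover have "card (rows A) \<le> CARD('n)"
    unfolding rows_eq by (rule card_image_le) simp
  ultimately have card_rows: "card (rows A) = CARD('n)" by simp
  have indep: "vec.independent (rows A)"
    using vec.card_eq_dim[OF subset_refl _ fin] vec.span_superset card_rows rank
    by (simp add: row_rank_def_gen)
  have inj_row: "inj ?row"
    by (rule eq_card_imp_inj_on) (simp_all add: card_rows flip: rows_eq)
  have "\<forall>i. c i = 0" if comb: "(\<Sum>i\<in>UNIV. c i *s ?row i) = 0" for c
  proof -
    let ?c = "\<lambda>v. c (inv ?row v)"
    have inv_row: "inv ?row (row i A) = i" for i using inv_f_f[OF inj_row] by simp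
    have "(\<Sum>v\<in>rows A. ?c v *s v) = (\<Sum>i\<in>UNIV. c i *s ?row i)"
      unfolding rows_eq using inj_row by (simp add: sum.reindex inv_row)
    then have "(\<Sum>v\<in>rows A. ?c v *s v) = 0" using comb by simp
    then have "\<forall>v\<in>rows A. ?c v = 0"
      using indep spec[where x = ?c] unfolding vec.independent_explicit by blast
    then show ?thesis by (simp add: rows_eq inv_row)
  qed
  then show ?thesis by (simp add: matrix_right_invertible_independent_rows)
qed

lemma det_eq_0_iff_nontrivial_kernel:
  fixes M :: "'a::field^'n^'n"
  shows "det M = 0 \<longleftrightarrow> (\<exists>c. c \<noteq> 0 \<and> M *v c = 0)"
  by (metis invertible_det_nz invertible_left_inverse matrix_left_invertible_ker)

lemma singular_product_iff:
  fixes A :: "'a::field^'m^'n" and W :: "'a^'n^'m"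
  shows "det (A ** W) = 0 \<longleftrightarrow> (\<exists>c. c \<noteq> 0 \<and> A *v (W *v c) = 0)"
  by (simp add: det_eq_0_iff_nontrivial_kernel matrix_vector_mul_assoc)

lemma same_kernel_same_singular_products:
  fixes A B :: "'a::field^'m^'n" and W :: "'a^'n^'m"
  assumes "\<And>y. A *v y = 0 \<longleftrightarrow> B *v y = 0"
  shows "det (A ** W) = 0 \<longleftrightarrow> det (B ** W) = 0"
  using assms by (simp add: singular_product_iff)

definition replace_column :: "'a^'c^'r \<Rightarrow> 'c \<Rightarrow> 'a^'r \<Rightarrow> 'a^'c^'r" where
  "replace_column M k v = (\<chi> i j. if j = k then v$i else M$i$j)"

lemma matrix_mult_replace_column:
  fixes A :: "'a::semiring_1^'m^'n" and W :: "'a^'p^'m"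
  shows "A ** replace_column W k v = replace_column (A ** W) k (A *v v)"
  by (simp add: replace_column_def matrix_matrix_mult_def matrix_vector_mult_def
      vec_eq_iff if_distrib sum.If_cases cong: if_cong)

lemma replace_column_mult_axis:
  fixes W :: "'a::semiring_1^'p^'m"
  shows "replace_column W k v *v axis k 1 = v"
proof -
  have "(replace_column W k v *v axis k 1)$j = v$j" for j
    by (simp add: replace_column_def matrix_vector_mult_def axis_def if_distrib
        cong: if_cong)
  then show ?thesis by (simp add: vec_eq_iff)
qed

lemma det_replace_column_identity:
  fixes v :: "'a::field^'n"
  shows "det (replace_column (mat 1) k v) = v$k"
  using cramer_lemma[of k "mat 1" v, unfolded matrix_vector_mul_lid]
  by (simp add: replace_column_def)

lemma kernel_subset_of_singular_products:
  fixes A B :: "'a::field^'m^'n"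
  assumes right_inv: "B ** R = mat 1"
    and singular: "\<And>W. det (A ** W) = 0 \<Longrightarrow> det (B ** W) = 0"
    and Ax: "A *v x = 0"
  shows "B *v x = 0"
proof (rule ccontr)
  assume "B *v x \<noteq> 0"
  then obtain k where k: "(B *v x)$k \<noteq> 0" by (metis vec_eq_iff zero_index)
  let ?W = "replace_column R k x"
  have "(A ** ?W) *v axis k 1 = 0"
    by (simp add: Ax replace_column_mult_axis flip: matrix_vector_mul_assoc)
  then have "det (A ** ?W) = 0"
    by (meson axis_eq_0_iff det_eq_0_iff_nontrivial_kernel one_neq_zero)
  moreover have "det (B ** ?W) = (B *v x)$k"
    by (simp add: matrix_mult_replace_column right_inv det_replace_column_identity)
  ultimately show False using singular k by simp
qed

lemma tensor_map_eq_matrix_mult: "tensor_map A W = A ** W"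
  by (simp add: tensor_map_def matrix_matrix_mult_def vec_eq_iff sum_component)

theorem mainTheorem12:
  fixes A B :: "complex^'m^'n"
  assumes "rank A = CARD('n)" and "rank B = CARD('n)"
  shows "(tensor_map A -` det_hypersurface = tensor_map B -` det_hypersurface)
     \<longleftrightarrow> mat_kernel A = mat_kernel B"
proof -
  have preimage_eq: "tensor_map A -` det_hypersurface = tensor_map B -` det_hypersurface
      \<longleftrightarrow> (\<forall>W. det (A ** W) = 0 \<longleftrightarrow> det (B ** W) = 0)"
    by (auto simp: set_eq_iff tensor_map_eq_matrix_mult det_hypersurface_def)
  have kernel_eq: "mat_kernel A = mat_kernel B \<longleftrightarrow> (\<forall>y. A *v y = 0 \<longleftrightarrow> B *v y = 0)"
    by (auto simp: mat_kernel_def)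
  obtain RA where RA: "A ** RA = mat 1" using full_row_rank_right_invertible assms(1) by blast
  obtain RB where RB: "B ** RB = mat 1" using full_row_rank_right_invertible assms(2) by blast
  show ?thesis
    unfolding preimage_eq kernel_eq
    using same_kernel_same_singular_products
      kernel_subset_of_singular_products[OF RA] kernel_subset_of_singular_products[OF RB]
    by metis
qed

end
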